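(* Consider DBSs in a plane with reference point $\mathbf{o}'$, whose locations at time $0$ form a homogeneous PPP of density $\lambda_0$. The serving DBS is the one nearest to $\mathbf{o}'$, at distance $u_0$; it flies towards $\mathbf{o}'$ at speed $v$ and hovers there. Conditioned on $u_0$, the other (interfering) DBSs at time $0$ form a PPP of density $\lambda_0$ outside $b(\mathbf{o}',u_0)$ and $0$ inside it, and each interfering DBS moves according to the RS mobility model with flight distance $R$ having cdf $F_R$ and pdf $f_R$. Then, conditioned on $u_0$, at time $t$ the interfering DBSs form an inhomogeneous PPP whose density at distance $u_{\mathbf{x}}$ from $\mathbf{o}'$ is $$\lambda(t;u_{\mathbf{x}},u_0)=\lambda_0\begin{cases}1 & u_0+vt\le u_{\mathbf{x}},\\ \beta(t,u_{\mathbf{x}},u_0) & |u_0-vt|\le u_{\mathbf{x}}\le u_0+vt,\\ \beta(t,u_{\mathbf{x}},u_0)\,\mathbf{1}\!\left(t>\frac{u_0}{v}\right) & 0\le u_{\mathbf{x}}\le|u_0-vt|,\end{cases}$$ with $$\beta(t,u_{\mathbf{x}},u_0)=F_R(u_{\mathbf{x}}-u_0)+(1-F_R(r))\frac{1}{\pi}\cos^{-1}\!\left(\frac{u_0^2-u_{\mathbf{x}}^2-r^2}{2u_{\mathbf{x}}r}\right)+\int_{|u_{\mathbf{x}}-u_0|}^{r} f_R(l)\frac{1}{\pi}\cos^{-1}\!\left(\frac{u_0^2-u_{\mathbf{x}}^2-l^2}{2u_{\mathbf{x}}l}\right)\mathrm{d}l,$$ where $r=\min\{vt,\,u_{\ma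thbf{x}}+u_0\}$.
   Context: $b(\mathbf{x},r)$ is the disc of radius $r$ centered at $\mathbf{x}$; $\mathbf{1}(\cdot)$ is the indicator; $F_R(x)=0$ for $x<0$. RS mobility model: each DBS, independently of the others and of its initial location, chooses a direction $\Theta\sim U[0,2\pi)$ and a distance $R\sim f_R$, moves distance $R$ in that direction along a straight line at constant speed $v$, then stops and hovers at the stopping location (so its net displacement at time $t$ is $\min\{vt,R\}$). *)

theory Defs
  imports "HOL-Probability.Probability"
begin

definition poisson_point_process ::
  "'w measure \<Rightarrow> 'a measure \<Rightarrow> ('w \<Rightarrow> 'a measure) \<Rightarrow> bool" where
  "poisson_point_process P L N \<longleftrightarrow>
     prob_space P \<and>
     (\<forall>w\<in>space P. sets (N w) = sets L \<and>
        (\<forall>B\<in>sets L. emeasure (N w) B = \<infinity> \<or> (\<exists>k::nat. emeasure (N w) B = of_nat k))) \<and>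
     (\<forall>B\<in>sets L. (\<lambda>w. emeasure (N w) B) \<in> borel_measurable P) \<and>
     (\<forall>B\<in>sets L. emeasure L B < \<infinity> \<longrightarrow>
        (\<forall>k::nat. measure P {w\<in>space P. emeasure (N w) B = of_nat k}
            = (enn2real (emeasure L B)) ^ k / fact k * exp (- enn2real (emeasure L B)))) \<and>
     (\<forall>(I::nat set) B. finite I \<longrightarrow> (\<forall>i\<in>I. B i \<in> sets L \<and> emeasure L (B i) < \<infinity>) \<longrightarrow>
        disjoint_family_on B I \<longrightarrow>
        prob_space.indep_vars P (\<lambda>_. borel) (\<lambda>i w. emeasure (N w) (B i)) I)"

text \<open>Net displacement in the RS mobility model at time t: heading theta, flight
distance l, speed v.\<close>
definition rs_displace :: "real \<Rightarrow> real \<Rightarrow> (real \<times> real) \<times> (real \<times> real) \<Rightarrow> real \<times> real" where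
  "rs_displace v t p = (case p of (x, (theta, l)) \<Rightarrow>
      x + min (v * t) l *\<^sub>R (cos theta, sin theta))"

definition beta_fn :: "(real \<Rightarrow> real) \<Rightarrow> (real \<Rightarrow> real) \<Rightarrow> real \<Rightarrow> real \<Rightarrow> real \<Rightarrow> real \<Rightarrow> real" where
  "beta_fn FR fR v t ux u0 =
     (let r = min (v * t) (ux + u0) in
        FR (ux - u0)
        + (1 - FR r) * (1 / pi) * arccos ((u0\<^sup>2 - ux\<^sup>2 - r\<^sup>2) / (2 * ux * r))
        + (LBINT l=\<bar>ux - u0\<bar>..r. fR l * (1 / pi) * arccos ((u0\<^sup>2 - ux\<^sup>2 - l\<^sup>2) / (2 * ux * l))))"

definition lambda_t :: "real \<Rightarrow> (real \<Rightarrow> real) \<Rightarrow> (real \<Rightarrow> real) \<Rightarrow> real \<Rightarrow> real \<Rightarrow> real \<Rightarrow> real \<Rightarrow> real" where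
  "lambda_t lam0 FR fR v t ux u0 = lam0 *
     (if u0 + v * t \<le> ux then 1
      else if \<bar>u0 - v * t\<bar> \<le> ux then beta_fn FR fR v t ux u0
      else beta_fn FR fR v t ux u0 * (if t > u0 / v then 1 else 0))"

end

theory Submission
  imports Defs
begin

text \<open>Conditioned on \<open>u\<^sub>0\<close>, the interfering DBSs at time \<open>t\<close> are the image of the marked
  PPP of initial positions, headings \<open>\<Theta>\<close> and flight distances \<open>R\<close> under the displacement
  map, so by the mapping theorem they form a PPP whose intensity is the image of the marked
  intensity.  After the translation \<open>y = x + min (v t) R (cos \<Theta>, sin \<Theta>)\<close> and Fubini, the
  image intensity at \<open>y\<close> is \<open>\<lambda>\<^sub>0\<close> times the probability that the starting point
  \<open>y - min (v t) R (cos \<Theta>, sin \<Theta>)\<close> lies outside \<open>b(o', u\<^sub>0)\<close>.  For a fixed displacement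
  \<open>m\<close> the law of cosines shows that this happens for the fraction
  \<open>arccos ((u\<^sub>0\<^sup>2 - u\<^sub>x\<^sup>2 - m\<^sup>2) / (2 u\<^sub>x m)) / \<pi>\<close> of the headings; integrating against \<open>f\<^sub>R\<close>
  and splitting the range of \<open>R\<close> at \<open>\<bar>u\<^sub>x - u\<^sub>0\<bar>\<close> and \<open>r\<close> yields \<open>\<beta>\<close>.\<close>

lemma (in prob_space) indep_vars_cong_space:
  assumes "\<And>i w. i \<in> I \<Longrightarrow> w \<in> space M \<Longrightarrow> X i w = Y i w"
  shows "indep_vars M' X I \<longleftrightarrow> indep_vars M' Y I"
proof -
  have "X i -` A \<inter> space M = Y i -` A \<inter> space M" if "i \<in> I" for i A
    using assms[OF that] by auto
  moreover have "random_variable (M' i) (X i) \<longleftrightarrow> random_variable (M' i) (Y i)" if "i \<in> I" for i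
    using assms[OF that] by (intro measurable_cong) simp
  ultimately show ?thesis
    unfolding indep_vars_def2 by (intro conj_cong indep_sets_cong ball_cong) auto
qed

lemma emeasure_distr_sets_cong:
  assumes "sets K = sets L" "f \<in> L \<rightarrow>\<^sub>M M" "B \<in> sets M"
  shows "emeasure (distr K M f) B = emeasure K (f -` B \<inter> space L)"
proof -
  have "f \<in> K \<rightarrow>\<^sub>M M"
    using assms(2) measurable_cong_sets[OF assms(1) refl, of M] by simp
  then show ?thesis
    using assms(3) sets_eq_imp_space_eq[OF assms(1)] by (simp add: emeasure_distr)
qed

lemma poisson_point_process_distr:
  assumes ppp: "poisson_point_process P L N" and f: "f \<in> L \<rightarrow>\<^sub>M M"
  shows "poisson_point_process P (distr L M f) (\<lambda>w. distr (N w) M f)"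
proof -
  let ?C = "\<lambda>B. f -` B \<inter> space L"
  obtain prob: "prob_space P"
    and N_counts: "\<forall>w\<in>space P. sets (N w) = sets L \<and>
      (\<forall>B\<in>sets L. emeasure (N w) B = \<infinity> \<or> (\<exists>k::nat. emeasure (N w) B = of_nat k))"
    and meas: "\<forall>B\<in>sets L. (\<lambda>w. emeasure (N w) B) \<in> borel_measurable P"
    and poisson: "\<forall>B\<in>sets L. emeasure L B < \<infinity> \<longrightarrow> (\<forall>k::nat.
      measure P {w\<in>space P. emeasure (N w) B = of_nat k}
        = enn2real (emeasure L B) ^ k / fact k * exp (- enn2real (emeasure L B)))"
    and indep: "\<forall>(I::nat set) B. finite I \<longrightarrow> (\<forall>i\<in>I. B i \<in> sets L \<and> emeasure L (B i) < \<infinity>) \<longrightarrow>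
      disjoint_family_on B I \<longrightarrow> prob_space.indep_vars P (\<lambda>_. borel) (\<lambda>i w. emeasure (N w) (B i)) I"
    using ppp unfolding poisson_point_process_def by (elim conjE) (rule that)
  have C: "?C B \<in> sets L" if "B \<in> sets M" for B
    using f that by (rule measurable_sets)
  have count: "emeasure (distr (N w) M f) B = emeasure (N w) (?C B)"
    if "w \<in> space P" "B \<in> sets M" for w B
    using N_counts that f by (intro emeasure_distr_sets_cong) auto
  have intensity: "emeasure (distr L M f) B = emeasure L (?C B)" if "B \<in> sets M" for B
    using f that by (rule emeasure_distr)
  show ?thesis
    unfolding poisson_point_process_def
  proof (intro conjI ballI allI impI)
    show "prob_space P" by (fact prob)
  next
    fix w assume w: "w \<in> space P"
    show "sets (distr (N w) M f) = sets (distr L M f)" by simp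
    fix B assume "B \<in> sets (distr L M f)"
    then have "B \<in> sets M" by simp
    then show "emeasure (distr (N w) M f) B = \<infinity> \<or> (\<exists>k::nat. emeasure (distr (N w) M f) B = of_nat k)"
      using N_counts w C by (simp add: count)
  next
    fix B assume "B \<in> sets (distr L M f)"
    then have B: "B \<in> sets M" by simp
    show "(\<lambda>w. emeasure (distr (N w) M f) B) \<in> borel_measurable P"
      using meas[rule_format, OF C[OF B]] by (rule measurable_cong[THEN iffD1, rotated]) (simp add: count B)
  next
    fix B k assume "B \<in> sets (distr L M f)" "emeasure (distr L M f) B < \<infinity>"
    then have B: "B \<in> sets M" and fin: "emeasure L (?C B) < \<infinity>"
      by (simp_all add: intensity)
    have "{w\<in>space P. emeasure (distr (N w) M f) B = of_nat k} = {w\<in>space P. emeasure (N w) (?C B) = of_nat k}"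
      by (auto simp: count B)
    then show "measure P {w\<in>space P. emeasure (distr (N w) M f) B = of_nat k}
        = enn2real (emeasure (distr L M f) B) ^ k / fact k * exp (- enn2real (emeasure (distr L M f) B))"
      using poisson C[OF B] fin by (simp add: intensity B)
  next
    fix I :: "nat set" and B
    assume I: "finite I" and BI: "\<forall>i\<in>I. B i \<in> sets (distr L M f) \<and> emeasure (distr L M f) (B i) < \<infinity>"
      and disj: "disjoint_family_on B I"
    have "\<forall>i\<in>I. ?C (B i) \<in> sets L \<and> emeasure L (?C (B i)) < \<infinity>"
      by (metis BI C intensity sets_distr)
    moreover have "disjoint_family_on (\<lambda>i. ?C (B i)) I"
      using disj unfolding disjoint_family_on_def by auto
    ultimately have "prob_space.indep_vars P (\<lambda>_. borel) (\<lambda>i w. emeasure (N w) (?C (B i))) I"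
      using indep I by simp
    then show "prob_space.indep_vars P (\<lambda>_. borel) (\<lambda>i w. emeasure (distr (N w) M f) (B i)) I"
      using BI by (subst prob_space.indep_vars_cong_space[OF prob]) (auto simp: count)
  qed
qed

lemma cos_less_set_eq:
  assumes a: "-1 \<le> a" "a \<le> 1"
  shows "{s\<in>{0..<2*pi}. cos s < a} = {arccos a<..<2*pi - arccos a}"
proof -
  have ac: "0 \<le> arccos a" "arccos a \<le> pi" "cos (arccos a) = a"
    using a by (auto intro: arccos_lbound arccos_ubound cos_arccos)
  show ?thesis
  proof (intro set_eqI iffI)
    fix s assume s: "s \<in> {s\<in>{0..<2*pi}. cos s < a}"
    show "s \<in> {arccos a<..<2*pi - arccos a}"
    proof (cases "s \<le> pi")
      case True
      then have "arccos a < s" using cos_mono_less_eq[of s "arccos a"] s ac by auto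
      moreover have "s < 2*pi - arccos a"
      proof (rule ccontr)
        assume "\<not> s < 2*pi - arccos a"
        then have "s = pi" "arccos a = pi" using True ac by auto
        then show False using s ac by auto
      qed
      ultimately show ?thesis by auto
    next
      case False
      then have "arccos a < 2*pi - s"
        using cos_mono_less_eq[of "2*pi - s" "arccos a"] s ac by auto
      then show ?thesis using False ac by auto
    qed
  next
    fix s assume s: "s \<in> {arccos a<..<2*pi - arccos a}"
    have "cos s < a"
    proof (cases "s \<le> pi")
      case True
      then show ?thesis using cos_mono_less_eq[of s "arccos a"] s ac by auto
    next
      case False
      then show ?thesis using cos_mono_less_eq[of "2*pi - s" "arccos a"] s ac by auto
    qed
    then show "s \<in> {s\<in>{0..<2*pi}. cos s < a}" using s ac by auto
  qed
qed

lemma emeasure_cos_less: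
  "emeasure lborel {s\<in>{0..<2*pi}. cos s < a} = ennreal (2*pi - 2 * arccos (max (-1) (min 1 a)))"
proof (cases "a < -1")
  case True
  have "\<not> cos s < a" for s using cos_ge_minus_one[of s] True by linarith
  then have empty: "{s\<in>{0..<2*pi}. cos s < a} = {}" by blast
  show ?thesis unfolding empty using True by simp
next
  case not_below: False
  show ?thesis
  proof (cases "a > 1")
    case True
    have "cos s < a" for s using cos_le_one[of s] True by linarith
    then have full: "{s\<in>{0..<2*pi}. cos s < a} = {0..<2*pi}" by blast
    show ?thesis unfolding full using True by simp
  next
    case False
    then have a: "-1 \<le> a" "a \<le> 1" using not_below by auto
    have "arccos a \<le> pi" "0 \<le> arccos a" using a by (auto intro: arccos_lbound arccos_ubound)
    then show ?thesis unfolding cos_less_set_eq[OF a] using a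
      by (simp add: max_def min_def)
  qed
qed

lemma nn_integral_periodic_shift:
  fixes h :: "real \<Rightarrow> ennreal"
  assumes h[measurable]: "h \<in> borel_measurable borel" and periodic: "\<And>x. h (x + 2*pi) = h x"
    and \<phi>: "0 \<le> \<phi>" "\<phi> \<le> 2*pi"
  shows "(\<integral>\<^sup>+\<theta>. indicator {0..<2*pi} \<theta> * h (\<theta> - \<phi>) \<partial>lborel) = (\<integral>\<^sup>+\<theta>. indicator {0..<2*pi} \<theta> * h \<theta> \<partial>lborel)"
proof -
  have "(\<integral>\<^sup>+\<theta>. indicator {0..<2*pi} \<theta> * h (\<theta> - \<phi>) \<partial>lborel)
      = (\<integral>\<^sup>+s. indicator {0..<2*pi} (\<phi> + 1 * s) * h ((\<phi> + 1 * s) - \<phi>) \<partial>lborel)"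
    using nn_integral_real_affine[of "\<lambda>\<theta>. indicator {0..<2*pi} \<theta> * h (\<theta> - \<phi>)" 1 \<phi>] by simp
  also have "\<dots> = (\<integral>\<^sup>+s. indicator {-\<phi>..<0} s * h s + indicator {0..<2*pi-\<phi>} s * h s \<partial>lborel)"
    using \<phi> by (intro nn_integral_cong) (auto split: split_indicator)
  also have "\<dots> = (\<integral>\<^sup>+s. indicator {-\<phi>..<0} s * h s \<partial>lborel) + (\<integral>\<^sup>+s. indicator {0..<2*pi-\<phi>} s * h s \<partial>lborel)"
    by (rule nn_integral_add) auto
  also have "(\<integral>\<^sup>+s. indicator {-\<phi>..<0} s * h s \<partial>lborel)
      = (\<integral>\<^sup>+u. indicator {-\<phi>..<0} (-2*pi + 1 * u) * h (-2*pi + 1 * u) \<partial>lborel)"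
    using nn_integral_real_affine[of "\<lambda>s. indicator {-\<phi>..<0} s * h s" 1 "-2*pi"] by simp
  also have "\<dots> = (\<integral>\<^sup>+u. indicator {2*pi-\<phi>..<2*pi} u * h u \<partial>lborel)"
  proof (intro nn_integral_cong)
    fix u :: real
    have "h (-2*pi + 1 * u) = h u" using periodic[of "-2*pi + u"] by simp
    then show "indicator {-\<phi>..<0} (-2*pi + 1 * u) * h (-2*pi + 1 * u) = indicator {2*pi-\<phi>..<2*pi} u * h u"
      by (auto split: split_indicator)
  qed
  also have "(\<integral>\<^sup>+u. indicator {2*pi-\<phi>..<2*pi} u * h u \<partial>lborel) + (\<integral>\<^sup>+s. indicator {0..<2*pi-\<phi>} s * h s \<partial>lborel)
      = (\<integral>\<^sup>+s. indicator {2*pi-\<phi>..<2*pi} s * h s + indicator {0..<2*pi-\<phi>} s * h s \<partial>lborel)"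
    by (rule nn_integral_add[symmetric]) auto
  also have "\<dots> = (\<integral>\<^sup>+\<theta>. indicator {0..<2*pi} \<theta> * h \<theta> \<partial>lborel)"
    using \<phi> by (intro nn_integral_cong) (auto split: split_indicator)
  finally show ?thesis .
qed

lemma norm_diff_polar_power2:
  fixes ux m \<phi> \<theta> :: real
  shows "(norm ((ux * cos \<phi>, ux * sin \<phi>) - m *\<^sub>R (cos \<theta>, sin \<theta>)))\<^sup>2 = ux\<^sup>2 + m\<^sup>2 - 2 * ux * m * cos (\<theta> - \<phi>)"
proof -
  have "(norm ((ux * cos \<phi>, ux * sin \<phi>) - m *\<^sub>R (cos \<theta>, sin \<theta>)))\<^sup>2
      = (ux * cos \<phi> - m * cos \<theta>)\<^sup>2 + (ux * sin \<phi> - m * sin \<theta>)\<^sup>2"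
    by (simp add: norm_Pair)
  also have "\<dots> = ux\<^sup>2 * ((sin \<phi>)\<^sup>2 + (cos \<phi>)\<^sup>2) + m\<^sup>2 * ((sin \<theta>)\<^sup>2 + (cos \<theta>)\<^sup>2) - 2 * ux * m * (cos \<theta> * cos \<phi> + sin \<theta> * sin \<phi>)"
    by algebra
  also have "\<dots> = ux\<^sup>2 + m\<^sup>2 - 2 * ux * m * cos (\<theta> - \<phi>)"
    by (simp only: sin_cos_squared_add cos_diff mult_1_right)
  finally show ?thesis .
qed

lemma polar_form:
  fixes z :: "real \<times> real"
  assumes "norm z = \<rho>" "0 < \<rho>"
  obtains \<phi> where "0 \<le> \<phi>" "\<phi> < 2*pi" "z = (\<rho> * cos \<phi>, \<rho> * sin \<phi>)"
proof -
  have "(fst z)\<^sup>2 + (snd z)\<^sup>2 = \<rho>\<^sup>2"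
    unfolding assms(1)[symmetric] by (cases z) (simp add: norm_Pair)
  then have "(fst z / \<rho>)\<^sup>2 + (snd z / \<rho>)\<^sup>2 = 1"
    using assms(2) by (simp add: power_divide add_divide_distrib[symmetric])
  then obtain \<phi> where \<phi>: "0 \<le> \<phi>" "\<phi> < 2*pi" "fst z / \<rho> = cos \<phi>" "snd z / \<rho> = sin \<phi>"
    by (rule sincos_total_2pi)
  moreover have "z = (\<rho> * cos \<phi>, \<rho> * sin \<phi>)"
    using \<phi>(3,4) assms(2) by (cases z) (simp add: field_simps)
  ultimately show thesis using that by blast
qed

text \<open>Outside \<open>[-1, 1]\<close>, \<open>arccos\<close> is \<open>THE\<close> of an unsatisfiable predicate, hence one and the same
  junk value.\<close>
lemma arccos_eq_arccos_2:
  assumes "1 < \<bar>y\<bar>"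
  shows "arccos y = arccos 2"
proof -
  have "(\<lambda>x. 0 \<le> x \<and> x \<le> pi \<and> cos x = y) = (\<lambda>x. 0 \<le> x \<and> x \<le> pi \<and> cos x = 2)"
  proof (rule ext)
    fix x :: real
    have "\<bar>cos x\<bar> \<le> 1"
      using cos_le_one[of x] cos_ge_minus_one[of x] by (simp add: abs_le_iff)
    then have "cos x \<noteq> y"
      using assms by (metis not_le)
    moreover have "cos x \<noteq> 2"
      using cos_le_one[of x] by linarith
    ultimately show "(0 \<le> x \<and> x \<le> pi \<and> cos x = y) = (0 \<le> x \<and> x \<le> pi \<and> cos x = 2)"
      by simp
  qed
  then show ?thesis
    unfolding arccos_def by simp
qed

lemma borel_measurable_arccos: "arccos \<in> borel_measurable borel"
proof -
  have "arccos = (\<lambda>y. if y \<in> {-1..1} then arccos y else arccos 2)"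
    by (auto simp: fun_eq_iff intro!: arccos_eq_arccos_2)
  also have "\<dots> \<in> borel_measurable borel"
    by (intro borel_measurable_continuous_on_if continuous_on_arccos' continuous_on_const) simp
  finally show ?thesis .
qed

lemma measurable_arccos[measurable (raw)]:
  "f \<in> borel_measurable M \<Longrightarrow> (\<lambda>x. arccos (f x :: real)) \<in> borel_measurable M"
  using measurable_compose[OF _ borel_measurable_arccos] by blast

text \<open>The fraction of headings \<open>\<theta>\<close> for which \<open>z - m (cos \<theta>, sin \<theta>)\<close> lies outside the disc
  \<open>b(0, u\<^sub>0)\<close> when \<open>\<bar>z\<bar> = u\<^sub>x\<close>.  Clamping the argument of \<open>arccos\<close> covers the cases where the
  circle of radius \<open>m\<close> about \<open>z\<close> misses the disc or lies inside it; \<open>m = 0\<close> is separate because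
  the quotient is then \<open>0 / 0 = 0\<close>.\<close>
definition outside_fraction :: "real \<Rightarrow> real \<Rightarrow> real \<Rightarrow> real" where
  "outside_fraction u0 ux m = (if m = 0 then (if u0 < ux then 1 else 0)
      else arccos (max (-1) (min 1 ((u0\<^sup>2 - ux\<^sup>2 - m\<^sup>2) / (2 * ux * m)))) / pi)"

lemma nn_integral_headings_outside_disc:
  fixes z :: "real \<times> real"
  assumes z: "norm z = ux" and ux: "0 < ux" and m: "0 \<le> m" and u0: "0 < u0"
  shows "(\<integral>\<^sup>+\<theta>. ennreal (indicator {0..<2*pi} \<theta> / (2*pi) * indicator {\<theta>. u0 < norm (z - m *\<^sub>R (cos \<theta>, sin \<theta>))} \<theta>) \<partial>lborel)
     = ennreal (outside_fraction u0 ux m)"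
proof (cases "m = 0")
  case True
  have "(\<integral>\<^sup>+\<theta>. ennreal (indicator {0..<2*pi} \<theta> / (2*pi) * indicator {\<theta>. u0 < norm (z - m *\<^sub>R (cos \<theta>, sin \<theta>))} \<theta>) \<partial>lborel)
      = (\<integral>\<^sup>+\<theta>. ennreal (1 / (2*pi) * (if u0 < ux then 1 else 0)) * indicator {0..<2*pi} \<theta> \<partial>lborel)"
    using True z by (intro nn_integral_cong) (auto simp: zero_prod_def[symmetric] split: split_indicator)
  also have "\<dots> = ennreal (1 / (2*pi) * (if u0 < ux then 1 else 0)) * ennreal (2*pi)"
    by (subst nn_integral_cmult_indicator) auto
  also have "\<dots> = ennreal (outside_fraction u0 ux m)"
    using True by (simp add: outside_fraction_def ennreal_mult'[symmetric])
  finally show ?thesis .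
next
  case False
  then have m0: "0 < m" using m by simp
  obtain \<phi> where \<phi>: "0 \<le> \<phi>" "\<phi> < 2*pi" and z_polar: "z = (ux * cos \<phi>, ux * sin \<phi>)"
    using polar_form[OF z ux] by blast
  define a where "a = (ux\<^sup>2 + m\<^sup>2 - u0\<^sup>2) / (2 * ux * m)"
  have outside_iff: "u0 < norm (z - m *\<^sub>R (cos \<theta>, sin \<theta>)) \<longleftrightarrow> cos (\<theta> - \<phi>) < a" for \<theta>
  proof -
    have "u0 < norm (z - m *\<^sub>R (cos \<theta>, sin \<theta>)) \<longleftrightarrow> u0\<^sup>2 < (norm (z - m *\<^sub>R (cos \<theta>, sin \<theta>)))\<^sup>2"
      using u0 by (smt (verit) norm_ge_zero power_mono power_strict_mono zero_less_numeral pos2 power_less_imp_less_base)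
    also have "\<dots> \<longleftrightarrow> cos (\<theta> - \<phi>) < a"
      unfolding z_polar norm_diff_polar_power2 a_def using ux m0 by (simp add: field_simps)
    finally show ?thesis .
  qed
  have "(\<integral>\<^sup>+\<theta>. ennreal (indicator {0..<2*pi} \<theta> / (2*pi) * indicator {\<theta>. u0 < norm (z - m *\<^sub>R (cos \<theta>, sin \<theta>))} \<theta>) \<partial>lborel)
      = ennreal (1 / (2*pi)) * (\<integral>\<^sup>+\<theta>. indicator {0..<2*pi} \<theta> * indicator {s. cos s < a} (\<theta> - \<phi>) \<partial>lborel)"
    using outside_iff by (subst nn_integral_cmult[symmetric]) (auto intro!: nn_integral_cong split: split_indicator)
  also have "(\<integral>\<^sup>+\<theta>. indicator {0..<2*pi} \<theta> * indicator {s. cos s < a} (\<theta> - \<phi>) \<partial>lborel)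
      = (\<integral>\<^sup>+\<theta>. indicator {0..<2*pi} \<theta> * indicator {s. cos s < a} \<theta> \<partial>lborel)"
    using \<phi> by (intro nn_integral_periodic_shift) (auto simp: indicator_def)
  also have "\<dots> = (\<integral>\<^sup>+\<theta>. indicator {s\<in>{0..<2*pi}. cos s < a} \<theta> \<partial>lborel)"
    by (intro nn_integral_cong) (simp split: split_indicator)
  also have "\<dots> = ennreal (2*pi - 2 * arccos (max (-1) (min 1 a)))"
    by (subst nn_integral_indicator) (simp, rule emeasure_cos_less)
  also have "ennreal (1 / (2*pi)) * \<dots> = ennreal ((pi - arccos (max (-1) (min 1 a))) / pi)"
    using arccos_ubound[of "max (-1) (min 1 a)"]
    by (simp add: ennreal_mult''[symmetric] field_simps)
  also have "(pi - arccos (max (-1) (min 1 a))) / pi = outside_fraction u0 ux m"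
  proof -
    have "(u0\<^sup>2 - ux\<^sup>2 - m\<^sup>2) / (2 * ux * m) = - a"
      unfolding a_def minus_divide_left by (simp add: algebra_simps)
    moreover have "max (-1) (min 1 (- a)) = - max (-1) (min 1 a)"
      by (simp add: max_def min_def)
    ultimately show ?thesis
      using m0 by (simp add: outside_fraction_def arccos_minus)
  qed
  finally show ?thesis .
qed

lemma cosine_law_quotient_bounds:
  fixes u0 ux m :: real
  assumes "0 < ux" "0 < m"
  shows "(u0\<^sup>2 - ux\<^sup>2 - m\<^sup>2) / (2 * ux * m) \<le> -1 \<longleftrightarrow> u0\<^sup>2 \<le> (ux - m)\<^sup>2"
    and "-1 \<le> (u0\<^sup>2 - ux\<^sup>2 - m\<^sup>2) / (2 * ux * m) \<longleftrightarrow> (ux - m)\<^sup>2 \<le> u0\<^sup>2"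
    and "(u0\<^sup>2 - ux\<^sup>2 - m\<^sup>2) / (2 * ux * m) \<le> 1 \<longleftrightarrow> u0\<^sup>2 \<le> (ux + m)\<^sup>2"
    and "1 \<le> (u0\<^sup>2 - ux\<^sup>2 - m\<^sup>2) / (2 * ux * m) \<longleftrightarrow> (ux + m)\<^sup>2 \<le> u0\<^sup>2"
  using assms by (simp_all add: divide_le_eq le_divide_eq power2_diff power2_sum; linarith)+

lemma outside_fraction_eq_1:
  assumes "0 < ux" "0 < u0" "0 \<le> m" "u0 \<le> \<bar>ux - m\<bar>" "ux \<noteq> u0"
  shows "outside_fraction u0 ux m = 1"
proof (cases "m = 0")
  case False
  have "u0\<^sup>2 \<le> (ux - m)\<^sup>2"
    using assms by (metis abs_le_square_iff abs_of_pos)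
  then show ?thesis
    using assms False cosine_law_quotient_bounds(1)[of ux m u0] by (simp add: outside_fraction_def)
qed (use assms in \<open>simp add: outside_fraction_def\<close>)

lemma outside_fraction_eq_0:
  assumes "0 < ux" "0 \<le> m" "ux + m \<le> u0" "ux \<noteq> u0"
  shows "outside_fraction u0 ux m = 0"
proof (cases "m = 0")
  case False
  have "(ux + m)\<^sup>2 \<le> u0\<^sup>2"
    using assms by (intro power_mono) auto
  then show ?thesis
    using assms False cosine_law_quotient_bounds(4)[of ux m u0] by (simp add: outside_fraction_def)
qed (use assms in \<open>simp add: outside_fraction_def\<close>)

lemma outside_fraction_arccos:
  assumes "0 < ux" "0 < u0" "\<bar>ux - u0\<bar> \<le> m" "m \<le> ux + u0" "0 < m"
  shows "outside_fraction u0 ux m = arccos ((u0\<^sup>2 - ux\<^sup>2 - m\<^sup>2) / (2 * ux * m)) / pi"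
proof -
  have "(ux - m)\<^sup>2 \<le> u0\<^sup>2" "u0\<^sup>2 \<le> (ux + m)\<^sup>2"
    using assms by (auto simp: abs_le_square_iff[symmetric] intro: power_mono)
  then show ?thesis
    using assms cosine_law_quotient_bounds(2,3)[of ux m u0] by (simp add: outside_fraction_def)
qed

lemma borel_measurable_outside_fraction[measurable]: "outside_fraction u0 ux \<in> borel_measurable borel"
  unfolding outside_fraction_def by measurable

lemma outside_fraction_bounds: "0 \<le> outside_fraction u0 ux m" "outside_fraction u0 ux m \<le> 1"
  unfolding outside_fraction_def by (auto intro!: divide_nonneg_pos arccos_lbound simp: arccos_ubound)

locale flight_density =
  fixes fR FR :: "real \<Rightarrow> real"
  assumes fR_measurable[measurable]: "fR \<in> borel_measurable lborel"
    and fR_nonneg: "\<And>l. fR l \<ge> 0"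
    and fR_neg: "\<And>l. l < 0 \<Longrightarrow> fR l = 0"
    and fR_integrable: "integrable lborel fR"
    and fR_integral: "(\<integral>l. fR l \<partial>lborel) = 1"
    and FR_def: "\<And>x. FR x = (\<integral>l\<in>{..x}. fR l \<partial>lborel)"
begin

lemma fR_borel[measurable]: "fR \<in> borel_measurable borel"
  using fR_measurable by simp

lemma set_integrable_fR: "S \<in> sets lborel \<Longrightarrow> set_integrable lborel S fR"
  unfolding set_integrable_def by (intro integrable_mult_indicator fR_integrable)

lemma set_integral_fR_nonneg: "0 \<le> (\<integral>l\<in>S. fR l \<partial>lborel)"
  unfolding set_lebesgue_integral_def
  by (intro Bochner_Integration.integral_nonneg) (simp add: fR_nonneg)

lemma nn_integral_fR_indicator:
  assumes "S \<in> sets lborel"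
  shows "(\<integral>\<^sup>+l. ennreal (fR l * indicator S l) \<partial>lborel) = ennreal (\<integral>l\<in>S. fR l \<partial>lborel)"
  using set_integrable_fR[OF assms] unfolding set_integrable_def set_lebesgue_integral_def
  by (subst nn_integral_eq_integral[symmetric])
    (auto intro!: nn_integral_cong simp: fR_nonneg mult.commute split: split_indicator)

lemma nn_integral_fR: "(\<integral>\<^sup>+l. ennreal (fR l) \<partial>lborel) = 1"
  using nn_integral_eq_integral[OF fR_integrable] fR_nonneg fR_integral by simp

lemma FR_nonneg: "0 \<le> FR x"
  unfolding FR_def by (rule set_integral_fR_nonneg)

lemma FR_eq_0: "x < 0 \<Longrightarrow> FR x = 0"
  unfolding FR_def by (subst set_lebesgue_integral_cong[where g="\<lambda>_. 0"]) (auto intro: fR_neg)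

lemma set_integral_fR_greaterThan: "(\<integral>l\<in>{x<..}. fR l \<partial>lborel) = 1 - FR x"
proof -
  have "(\<integral>l. fR l \<partial>lborel) = (\<integral>l. indicator {..x} l *\<^sub>R fR l + indicator {x<..} l *\<^sub>R fR l \<partial>lborel)"
    by (intro Bochner_Integration.integral_cong) (auto split: split_indicator)
  also have "\<dots> = FR x + (\<integral>l\<in>{x<..}. fR l \<partial>lborel)"
    using set_integrable_fR[of "{..x}"] set_integrable_fR[of "{x<..}"]
    unfolding FR_def set_lebesgue_integral_def set_integrable_def
    by (intro Bochner_Integration.integral_add) auto
  finally show ?thesis using fR_integral by simp
qed

lemma FR_le_1: "FR x \<le> 1"
  using set_integral_fR_greaterThan[of x] set_integral_fR_nonneg[of "{x<..}"] by simp

lemma nn_integral_fR_fraction: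
  assumes [measurable]: "g \<in> borel_measurable borel" and g: "\<And>l. 0 \<le> g l" "\<And>l. g l \<le> 1"
    and "a \<le> b"
  shows "(\<integral>\<^sup>+l. ennreal (fR l * g l * indicator {a<..<b} l) \<partial>lborel) = ennreal (LBINT l=a..b. fR l * g l)"
    and "0 \<le> (LBINT l=a..b. fR l * g l)"
proof -
  have "integrable lborel (\<lambda>l. indicator {a<..<b} l *\<^sub>R (fR l * g l))"
  proof (rule Bochner_Integration.integrable_bound[OF fR_integrable])
    show "AE l in lborel. norm (indicator {a<..<b} l *\<^sub>R (fR l * g l)) \<le> norm (fR l)"
      using fR_nonneg g by (auto simp: mult_left_le split: split_indicator)
  qed measurable
  then show "(\<integral>\<^sup>+l. ennreal (fR l * g l * indicator {a<..<b} l) \<partial>lborel) = ennreal (LBINT l=a..b. fR l * g l)"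
    using \<open>a \<le> b\<close> unfolding interval_lebesgue_integral_le_eq[OF ereal_less_eq(3)[THEN iffD2, OF \<open>a \<le> b\<close>]]
      set_lebesgue_integral_def einterval_eq
    by (subst nn_integral_eq_integral[symmetric])
      (auto intro!: nn_integral_cong simp: fR_nonneg g split: split_indicator)
  show "0 \<le> (LBINT l=a..b. fR l * g l)"
    using fR_nonneg g
    unfolding interval_lebesgue_integral_le_eq[OF ereal_less_eq(3)[THEN iffD2, OF \<open>a \<le> b\<close>]]
      set_lebesgue_integral_def einterval_eq
    by (auto intro!: Bochner_Integration.integral_nonneg split: split_indicator)
qed

end

text \<open>The probability that a DBS whose displaced position is at distance \<open>u\<^sub>x\<close> from \<open>o'\<close>
  started outside \<open>b(o', u\<^sub>0)\<close>, when its displacement is \<open>min V R\<close>.\<close>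
definition outside_probability :: "(real \<Rightarrow> real) \<Rightarrow> real \<Rightarrow> real \<Rightarrow> real \<Rightarrow> ennreal" where
  "outside_probability fR u0 V ux = (\<integral>\<^sup>+l. ennreal (fR l * outside_fraction u0 ux (min V l)) \<partial>lborel)"

context flight_density
begin

lemma outside_probability_far:
  assumes "0 < ux" "0 < u0" "0 \<le> V" "V < ux - u0"
  shows "outside_probability fR u0 V ux = 1"
proof -
  have "ennreal (fR l * outside_fraction u0 ux (min V l)) = ennreal (fR l)" for l
    using assms fR_neg[of l] outside_fraction_eq_1[of ux u0 "min V l"] by (cases "l < 0") auto
  then show ?thesis
    unfolding outside_probability_def by (simp add: nn_integral_fR)
qed

lemma outside_probability_inner:
  assumes "0 < ux" "0 \<le> V" "V < u0 - ux"
  shows "outside_probability fR u0 V ux = 0"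
proof -
  have "ennreal (fR l * outside_fraction u0 ux (min V l)) = 0" for l
    using assms fR_neg[of l] outside_fraction_eq_0[of ux "min V l" u0] by (cases "l < 0") auto
  then show ?thesis
    unfolding outside_probability_def by simp
qed

lemma fR_outside_fraction_min_split:
  assumes ux: "0 < ux" "ux \<noteq> u0" and u0: "0 < u0" and V: "\<bar>ux - u0\<bar> \<le> V"
    and l: "l \<noteq> min V (ux + u0)"
  defines "d \<equiv> \<bar>ux - u0\<bar>" and "r \<equiv> min V (ux + u0)"
  shows "fR l * outside_fraction u0 ux (min V l) =
      fR l * indicator {..d} l * (if u0 < ux then 1 else 0) + fR l * outside_fraction u0 ux l * indicator {d<..<r} l
      + fR l * indicator {r<..} l * outside_fraction u0 ux r"
proof (cases "l < 0")
  case True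
  then show ?thesis by (simp add: fR_neg)
next
  case False
  have "d \<le> r" "r \<le> V"
    using ux u0 V unfolding d_def r_def by auto
  consider "l \<le> d" | "d < l" "l < r" | "d < l" "r < l"
    using l unfolding r_def by linarith
  then show ?thesis
  proof cases
    case 1
    then have "outside_fraction u0 ux (min V l) = (if u0 < ux then 1 else 0)"
      using False ux u0 \<open>d \<le> r\<close> \<open>r \<le> V\<close> outside_fraction_eq_1[of ux u0 l] outside_fraction_eq_0[of ux l u0]
      unfolding d_def by auto
    with 1 \<open>d \<le> r\<close> show ?thesis by simp
  next
    case 2
    then show ?thesis using \<open>r \<le> V\<close> by simp
  next
    case 3
    have "outside_fraction u0 ux (min V l) = outside_fraction u0 ux r"
    proof (cases "V \<le> ux + u0")
      case False
      then show ?thesis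
        using 3 ux u0 outside_fraction_eq_1[of ux u0 "min V l"] outside_fraction_eq_1[of ux u0 "ux + u0"]
        unfolding r_def by auto
    qed (use 3 r_def in auto)
    with 3 show ?thesis by simp
  qed
qed

lemma outside_probability_decompose:
  assumes ux: "0 < ux" "ux \<noteq> u0" and u0: "0 < u0" and V: "\<bar>ux - u0\<bar> \<le> V"
  defines "d \<equiv> \<bar>ux - u0\<bar>" and "r \<equiv> min V (ux + u0)"
  shows "outside_probability fR u0 V ux = ennreal (FR (ux - u0)
      + (LBINT l=d..r. fR l * outside_fraction u0 ux l) + (1 - FR r) * outside_fraction u0 ux r)"
proof -
  define c where "c = (if u0 < ux then 1 else 0 :: real)"
  let ?q = "outside_fraction u0 ux"
  have "d \<le> r"
    using ux u0 V unfolding d_def r_def by auto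
  have I2: "(\<integral>\<^sup>+l. ennreal (fR l * ?q l * indicator {d<..<r} l) \<partial>lborel) = ennreal (LBINT l=d..r. fR l * ?q l)"
    and I2_nonneg: "0 \<le> (LBINT l=d..r. fR l * ?q l)"
    using borel_measurable_outside_fraction outside_fraction_bounds \<open>d \<le> r\<close>
    by (rule nn_integral_fR_fraction)+
  have "outside_probability fR u0 V ux =
      (\<integral>\<^sup>+l. ennreal (fR l * indicator {..d} l) * ennreal c + ennreal (fR l * ?q l * indicator {d<..<r} l)
          + ennreal (fR l * indicator {r<..} l) * ennreal (?q r) \<partial>lborel)"
    unfolding outside_probability_def
  proof (rule nn_integral_cong_AE)
    show "AE l in lborel. ennreal (fR l * ?q (min V l)) =
        ennreal (fR l * indicator {..d} l) * ennreal c + ennreal (fR l * ?q l * indicator {d<..<r} l)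
          + ennreal (fR l * indicator {r<..} l) * ennreal (?q r)"
      using AE_lborel_singleton[of r]
    proof eventually_elim
      case (elim l)
      have "0 \<le> fR l * indicator {..d} l * c" "0 \<le> fR l * ?q l * indicator {d<..<r} l"
        "0 \<le> fR l * indicator {r<..} l * ?q r" "0 \<le> fR l * indicator {..d} l" "0 \<le> fR l * indicator {r<..} l"
        using fR_nonneg[of l] outside_fraction_bounds by (simp_all add: c_def)
      then show ?case
        using c_def outside_fraction_bounds(1)[of u0 ux r]
        unfolding d_def r_def
        by (simp only: fR_outside_fraction_min_split[OF ux u0 V elim[unfolded r_def]] ennreal_plus
            ennreal_mult add_nonneg_nonneg) simp
    qed
  qed
  also have "\<dots> = ennreal (FR d) * ennreal c + ennreal (LBINT l=d..r. fR l * ?q l) + ennreal (1 - FR r) * ennreal (?q r)"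
    using nn_integral_fR_indicator[of "{..d}"] nn_integral_fR_indicator[of "{r<..}"]
    by (simp add: nn_integral_add nn_integral_multc I2 FR_def set_integral_fR_greaterThan)
  also have "\<dots> = ennreal (FR (ux - u0) + (LBINT l=d..r. fR l * ?q l) + (1 - FR r) * ?q r)"
  proof -
    have "FR d * c = FR (ux - u0)"
      using FR_eq_0[of "ux - u0"] ux(2) unfolding d_def c_def by auto
    then show ?thesis
      using FR_nonneg[of d] FR_nonneg[of "ux - u0"] FR_le_1[of r] I2_nonneg outside_fraction_bounds[of u0 ux r]
      by (simp add: c_def ennreal_mult'[symmetric] ennreal_plus[symmetric] del: ennreal_plus)
  qed
  finally show ?thesis .
qed

lemma outside_probability_ring:
  assumes ux: "0 < ux" "ux \<noteq> u0" and u0: "0 < u0" and V: "\<bar>ux - u0\<bar> \<le> v * t"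
  shows "outside_probability fR u0 (v * t) ux = ennreal (beta_fn FR fR v t ux u0)"
proof -
  define r where "r = min (v * t) (ux + u0)"
  have r: "\<bar>ux - u0\<bar> \<le> r" "r \<le> ux + u0" "0 < r"
    using ux u0 V unfolding r_def by auto
  have "outside_fraction u0 ux r = arccos ((u0\<^sup>2 - ux\<^sup>2 - r\<^sup>2) / (2 * ux * r)) / pi"
    using r ux u0 by (intro outside_fraction_arccos) auto
  moreover have "(LBINT l=\<bar>ux - u0\<bar>..r. fR l * outside_fraction u0 ux l)
      = (LBINT l=\<bar>ux - u0\<bar>..r. fR l * (1 / pi) * arccos ((u0\<^sup>2 - ux\<^sup>2 - l\<^sup>2) / (2 * ux * l)))"
    using r ux u0 by (intro interval_integral_cong) (auto simp: outside_fraction_arccos)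
  ultimately show ?thesis
    using outside_probability_decompose[OF ux u0 V]
    unfolding beta_fn_def Let_def r_def[symmetric] by (simp add: add_ac)
qed

lemma lambda_t_eq_outside_probability:
  assumes lam0: "0 < lam0" and v: "0 < v" and t: "0 \<le> t" and u0: "0 < u0"
    and ux: "0 < ux" "ux \<noteq> u0" "ux \<noteq> u0 + v * t"
  shows "ennreal lam0 * outside_probability fR u0 (v * t) ux = ennreal (lambda_t lam0 FR fR v t ux u0)"
proof -
  have V: "0 \<le> v * t" using v t by simp
  have tv: "u0 / v < t \<longleftrightarrow> u0 < v * t" using v by (simp add: pos_divide_less_eq mult.commute)
  consider "u0 + v * t < ux" | "\<bar>ux - u0\<bar> \<le> v * t" | "v * t < u0 - ux"
    using ux(3) by linarith
  then show ?thesis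
  proof cases
    case 1
    then show ?thesis using outside_probability_far[OF ux(1) u0 V] by (simp add: lambda_t_def)
  next
    case 2
    then show ?thesis
      using outside_probability_ring[OF ux(1,2) u0 2] ux u0 lam0 tv V
      by (auto simp: lambda_t_def ennreal_mult' abs_if)
  next
    case 3
    then show ?thesis using outside_probability_inner[OF ux(1) V 3] tv ux(1) V by (auto simp: lambda_t_def)
  qed
qed

end

lemma borel_measurable_interval_integral:
  fixes a b :: "real \<Rightarrow> real" and k :: "real \<Rightarrow> real \<Rightarrow> real"
  assumes [measurable]: "a \<in> borel_measurable borel" "b \<in> borel_measurable borel"
    "case_prod k \<in> borel_measurable (borel \<Otimes>\<^sub>M lborel)"
  shows "(\<lambda>x. LBINT l=a x..b x. k x l) \<in> borel_measurable borel"
proof -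
  have "(\<lambda>x. LBINT l=a x..b x. k x l) = (\<lambda>x. if a x \<le> b x
      then (\<integral>l. (if a x < l \<and> l < b x then k x l else 0) \<partial>lborel)
      else - (\<integral>l. (if b x < l \<and> l < a x then k x l else 0) \<partial>lborel))"
    by (auto simp: fun_eq_iff interval_lebesgue_integral_def set_lebesgue_integral_def
        intro!: Bochner_Integration.integral_cong split: split_indicator)
  also have "\<dots> \<in> borel_measurable borel" by measurable
  finally show ?thesis .
qed

lemma nn_integral_translate_pair:
  fixes g :: "'a::euclidean_space \<Rightarrow> 'b \<Rightarrow> ennreal" and d :: "'b \<Rightarrow> 'a"
  assumes "sigma_finite_measure M"
    and [measurable]: "case_prod g \<in> borel_measurable (borel \<Otimes>\<^sub>M M)" "d \<in> borel_measurable M"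
      "B \<in> sets borel"
  shows "(\<integral>\<^sup>+p. g (fst p) (snd p) * indicator B (fst p + d (snd p)) \<partial>(lborel \<Otimes>\<^sub>M M))
      = (\<integral>\<^sup>+y. indicator B y * (\<integral>\<^sup>+w. g (y - d w) w \<partial>M) \<partial>lborel)"
proof -
  interpret pair_sigma_finite lborel M
    using assms(1) by (simp add: pair_sigma_finite_def lborel.sigma_finite_measure_axioms)
  have sets: "sets (lborel \<Otimes>\<^sub>M M) = sets (borel \<Otimes>\<^sub>M M)"
    by (rule sets_pair_measure_cong) simp_all
  have [measurable]: "(\<lambda>p. g (fst p) (snd p) * indicator B (fst p + d (snd p))) \<in> borel_measurable (lborel \<Otimes>\<^sub>M M)"
    "(\<lambda>(y, w). g (y - d w) w * indicator B y) \<in> borel_measurable (lborel \<Otimes>\<^sub>M M)"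
    unfolding measurable_cong_sets[OF sets refl] by measurable
  have "(\<integral>\<^sup>+p. g (fst p) (snd p) * indicator B (fst p + d (snd p)) \<partial>(lborel \<Otimes>\<^sub>M M))
      = (\<integral>\<^sup>+w. \<integral>\<^sup>+x. g x w * indicator B (x + d w) \<partial>lborel \<partial>M)"
    using nn_integral_snd[of "\<lambda>p. g (fst p) (snd p) * indicator B (fst p + d (snd p))"] by simp
  also have "\<dots> = (\<integral>\<^sup>+w. \<integral>\<^sup>+y. g (y - d w) w * indicator B y \<partial>lborel \<partial>M)"
  proof (rule nn_integral_cong)
    fix w assume "w \<in> space M"
    then have [measurable]: "(\<lambda>x. g x w) \<in> borel_measurable borel" by measurable
    have "(\<integral>\<^sup>+x. g x w * indicator B (x + d w) \<partial>lborel)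
        = (\<integral>\<^sup>+x. g x w * indicator B (x + d w) \<partial>distr lborel borel ((+) (- d w)))"
      by (simp add: lborel_distr_plus)
    also have "\<dots> = (\<integral>\<^sup>+y. g (- d w + y) w * indicator B (- d w + y + d w) \<partial>lborel)"
      by (rule nn_integral_distr) simp_all
    finally show "(\<integral>\<^sup>+x. g x w * indicator B (x + d w) \<partial>lborel) = (\<integral>\<^sup>+y. g (y - d w) w * indicator B y \<partial>lborel)"
      by simp
  qed
  also have "\<dots> = (\<integral>\<^sup>+y. \<integral>\<^sup>+w. g (y - d w) w * indicator B y \<partial>M \<partial>lborel)"
    by (rule Fubini') measurable
  also have "\<dots> = (\<integral>\<^sup>+y. indicator B y * (\<integral>\<^sup>+w. g (y - d w) w \<partial>M) \<partial>lborel)"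
  proof (rule nn_integral_cong)
    fix y :: 'a
    have [measurable]: "(\<lambda>w. g (y - d w) w) \<in> borel_measurable M" by measurable
    show "(\<integral>\<^sup>+w. g (y - d w) w * indicator B y \<partial>M) = indicator B y * (\<integral>\<^sup>+w. g (y - d w) w \<partial>M)"
      using nn_integral_cmult[of "\<lambda>w. g (y - d w) w" M "indicator B y"] by (simp add: mult.commute)
  qed
  finally show ?thesis .
qed

lemma sets_lborel_pair:
  "sets (lborel :: ('a::euclidean_space \<times> 'b::euclidean_space) measure) = sets (borel \<Otimes>\<^sub>M borel)"
  unfolding borel_prod by simp

lemma null_sets_lborel_sphere: "sphere (c::'a::euclidean_space) r \<in> null_sets lborel"
  using negligible_sphere[of c r]
  by (auto simp: null_sets_completion_iff negligible_iff_null_sets negligible_convex_frontier)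

context flight_density
begin

lemma nn_integral_marks_outside:
  fixes y o' :: "real \<times> real"
  assumes u0: "0 < u0" and y: "0 < dist y o'" and V: "0 \<le> V"
  shows "(\<integral>\<^sup>+w. ennreal (indicator {x. u0 < dist x o'} (y - min V (snd w) *\<^sub>R (cos (fst w), sin (fst w)))
            * (indicator {0..<2*pi} (fst w) / (2*pi)) * fR (snd w)) \<partial>lborel)
       = outside_probability fR u0 V (dist y o')"
proof -
  define F where "F w = ennreal (indicator {x. u0 < dist x o'} (y - min V (snd w) *\<^sub>R (cos (fst w), sin (fst w)))
            * (indicator {0..<2*pi} (fst w) / (2*pi)) * fR (snd w))" for w :: "real \<times> real"
  have [measurable]: "F \<in> borel_measurable (lborel \<Otimes>\<^sub>M lborel)"
    unfolding F_def by measurable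
  have "integral\<^sup>N lborel F = integral\<^sup>N (lborel \<Otimes>\<^sub>M lborel) F"
    by (simp only: lborel_prod)
  also have "\<dots> = (\<integral>\<^sup>+l. \<integral>\<^sup>+\<theta>. F (\<theta>, l) \<partial>lborel \<partial>lborel)"
    by (rule lborel_pair.nn_integral_snd[symmetric]) measurable
  also have "\<dots> = outside_probability fR u0 V (dist y o')"
    unfolding outside_probability_def
  proof (rule nn_integral_cong)
    fix l :: real
    show "(\<integral>\<^sup>+\<theta>. F (\<theta>, l) \<partial>lborel) = ennreal (fR l * outside_fraction u0 (dist y o') (min V l))"
    proof (cases "l < 0")
      case True
      then show ?thesis by (simp add: F_def fR_neg)
    next
      case False
      have "dist (y - b) o' = norm ((y - o') - b)" for b
        by (simp add: dist_norm algebra_simps)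
      then have "(\<integral>\<^sup>+\<theta>. F (\<theta>, l) \<partial>lborel) = (\<integral>\<^sup>+\<theta>. ennreal (fR l) * ennreal (indicator {0..<2*pi} \<theta> / (2*pi) *
           indicator {\<theta>. u0 < norm ((y - o') - min V l *\<^sub>R (cos \<theta>, sin \<theta>))} \<theta>) \<partial>lborel)"
        unfolding F_def
        by (intro nn_integral_cong) (simp add: ennreal_mult'[symmetric] fR_nonneg mult_ac split: split_indicator)
      also have "\<dots> = ennreal (fR l) * ennreal (outside_fraction u0 (dist y o') (min V l))"
        using nn_integral_headings_outside_disc[of "y - o'" "dist y o'" "min V l" u0] y V False u0
        by (simp add: nn_integral_cmult dist_norm)
      finally show ?thesis
        by (simp add: ennreal_mult'[symmetric] fR_nonneg)
    qed
  qed
  finally show ?thesis unfolding F_def .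
qed

lemma nn_integral_marks_intensity:
  fixes y o' :: "real \<times> real"
  assumes lam0: "0 < lam0" and v: "0 < v" and t: "0 \<le> t" and u0: "0 < u0"
    and ux: "0 < dist y o'" "dist y o' \<noteq> u0" "dist y o' \<noteq> u0 + v * t"
  shows "(\<integral>\<^sup>+w. ennreal (lam0 * indicator {x. dist x o' > u0} (y - min (v * t) (snd w) *\<^sub>R (cos (fst w), sin (fst w)))
            * (indicator {0..<2*pi} (fst w) / (2*pi)) * fR (snd w)) \<partial>lborel)
       = ennreal (lambda_t lam0 FR fR v t (dist y o') u0)"
proof -
  let ?outside = "\<lambda>w. ennreal (indicator {x. u0 < dist x o'} (y - min (v * t) (snd w) *\<^sub>R (cos (fst w), sin (fst w)))
    * (indicator {0..<2*pi} (fst w) / (2*pi)) * fR (snd w))"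
  have [measurable]: "?outside \<in> borel_measurable lborel"
    unfolding measurable_cong_sets[OF sets_lborel_pair refl] by measurable
  have "(\<integral>\<^sup>+w. ennreal (lam0 * indicator {x. dist x o' > u0} (y - min (v * t) (snd w) *\<^sub>R (cos (fst w), sin (fst w)))
            * (indicator {0..<2*pi} (fst w) / (2*pi)) * fR (snd w)) \<partial>lborel)
      = (\<integral>\<^sup>+w. ennreal lam0 * ?outside w \<partial>lborel)"
    using lam0 by (intro nn_integral_cong) (simp add: ennreal_mult'[symmetric] mult.assoc)
  also have "\<dots> = ennreal lam0 * integral\<^sup>N lborel ?outside"
    by (rule nn_integral_cmult) measurable
  also have "\<dots> = ennreal lam0 * outside_probability fR u0 (v * t) (dist y o')"
    using nn_integral_marks_outside[OF u0 ux(1), of "v * t"] v t by simp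
  also have "\<dots> = ennreal (lambda_t lam0 FR fR v t (dist y o') u0)"
    by (rule lambda_t_eq_outside_probability[OF lam0 v t u0 ux])
  finally show ?thesis .
qed

lemma borel_measurable_FR[measurable]: "FR \<in> borel_measurable borel"
proof -
  have "FR = (\<lambda>x. \<integral>l. (if l \<le> x then fR l else 0) \<partial>lborel)"
    by (auto simp: fun_eq_iff FR_def set_lebesgue_integral_def
        intro!: Bochner_Integration.integral_cong split: split_indicator)
  also have "\<dots> \<in> borel_measurable borel" by measurable
  finally show ?thesis .
qed

lemma borel_measurable_lambda_t:
  fixes o' :: "real \<times> real"
  shows "(\<lambda>y. ennreal (lambda_t lam0 FR fR v t (dist y o') u0)) \<in> borel_measurable borel"
proof -
  have [measurable]: "(\<lambda>ux. LBINT l=\<bar>ux - u0\<bar>..min (v * t) (ux + u0).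
      fR l * (1 / pi) * arccos ((u0\<^sup>2 - ux\<^sup>2 - l\<^sup>2) / (2 * ux * l))) \<in> borel_measurable borel"
    by (rule borel_measurable_interval_integral) measurable
  show ?thesis
    unfolding lambda_t_def beta_fn_def Let_def by measurable
qed

lemma distr_marked_intensity:
  fixes o' :: "real \<times> real"
  assumes lam0: "0 < lam0" and v: "0 < v" and t: "0 \<le> t" and u0: "0 < u0"
  shows "distr (density lborel (\<lambda>(x, (theta, l)). ennreal (lam0 * indicator {y. dist y o' > u0} x
              * (indicator {0..<2*pi} theta / (2*pi)) * fR l))) borel (rs_displace v t)
    = density lborel (\<lambda>y. ennreal (lambda_t lam0 FR fR v t (dist y o') u0))"
    (is "distr (density lborel ?g) borel ?f = density lborel ?h")
proof (rule measure_eqI)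
  define d where "d w = min (v * t) (snd w) *\<^sub>R (cos (fst w), sin (fst w))" for w :: "real \<times> real"
  define g where "g x w = ennreal (lam0 * indicator {y. dist y o' > u0} x
    * (indicator {0..<2*pi} (fst w) / (2*pi)) * fR (snd w))" for x w :: "real \<times> real"
  have sets_points: "sets (lborel :: ((real \<times> real) \<times> (real \<times> real)) measure) = sets (borel \<Otimes>\<^sub>M (borel \<Otimes>\<^sub>M borel))"
    unfolding borel_prod by simp
  have [measurable]: "d \<in> borel_measurable lborel"
    unfolding d_def by (simp, intro borel_measurable_continuous_onI continuous_intros)
  have [measurable]: "case_prod g \<in> borel_measurable (borel \<Otimes>\<^sub>M lborel)"
    unfolding g_def measurable_cong_sets[OF sets_pair_measure_cong[OF refl sets_lborel_pair] refl] by measurable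
  have f_eq: "?f = (\<lambda>p. fst p + d (snd p))"
    by (auto simp: fun_eq_iff rs_displace_def d_def split: prod.splits)
  have g_eq: "?g = (\<lambda>p. g (fst p) (snd p))"
    by (auto simp: fun_eq_iff g_def)
  have g_meas[measurable]: "?g \<in> borel_measurable lborel" and f_meas[measurable]: "?f \<in> borel_measurable lborel"
    unfolding g_eq f_eq g_def d_def measurable_cong_sets[OF sets_points refl] by measurable
  show "sets (distr (density lborel ?g) borel ?f) = sets (density lborel ?h)"
    by simp
  fix B assume "B \<in> sets (distr (density lborel ?g) borel ?f)"
  then have B[measurable]: "B \<in> sets borel" by simp
  have "emeasure (distr (density lborel ?g) borel ?f) B = emeasure (density lborel ?g) (?f -` B \<inter> space lborel)"
    by (subst emeasure_distr) (simp_all add: measurable_cong_sets[OF sets_density refl])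
  also have "\<dots> = (\<integral>\<^sup>+p. ?g p * indicator (?f -` B \<inter> space lborel) p \<partial>lborel)"
    by (rule emeasure_density[OF g_meas measurable_sets[OF f_meas B]])
  also have "\<dots> = (\<integral>\<^sup>+p. g (fst p) (snd p) * indicator B (fst p + d (snd p)) \<partial>(lborel \<Otimes>\<^sub>M lborel))"
    unfolding lborel_prod g_eq f_eq by (intro nn_integral_cong) (simp split: split_indicator)
  also have "\<dots> = (\<integral>\<^sup>+y. indicator B y * (\<integral>\<^sup>+w. g (y - d w) w \<partial>lborel) \<partial>lborel)"
    by (rule nn_integral_translate_pair) (simp_all add: lborel.sigma_finite_measure_axioms)
  also have "\<dots> = (\<integral>\<^sup>+y. ?h y * indicator B y \<partial>lborel)"
  proof (rule nn_integral_cong_AE)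
    have "AE y in lborel. y \<notin> sphere o' 0 \<and> y \<notin> sphere o' u0 \<and> y \<notin> sphere o' (u0 + v * t)"
      using AE_not_in[OF null_sets_lborel_sphere[of o' 0]] AE_not_in[OF null_sets_lborel_sphere[of o' u0]]
        AE_not_in[OF null_sets_lborel_sphere[of o' "u0 + v * t"]]
      by eventually_elim auto
    then show "AE y in lborel. indicator B y * (\<integral>\<^sup>+w. g (y - d w) w \<partial>lborel) = ?h y * indicator B y"
    proof eventually_elim
      case (elim y)
      then have "0 < dist y o'" "dist y o' \<noteq> u0" "dist y o' \<noteq> u0 + v * t"
        by (auto simp: dist_commute)
      then show ?case
        unfolding g_def d_def using nn_integral_marks_intensity[OF lam0 v t u0] by (simp add: mult.commute)
    qed
  qed
  also have "\<dots> = emeasure (density lborel ?h) B"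
    using borel_measurable_lambda_t[of lam0 v t o' u0] by (simp add: emeasure_density)
  finally show "emeasure (distr (density lborel ?g) borel ?f) B = emeasure (density lborel ?h) B" .
qed

end

theorem corollary2:
  fixes P :: "'w measure"
    and N0 :: "'w \<Rightarrow> ((real \<times> real) \<times> (real \<times> real)) measure"
    and o' :: "real \<times> real"
    and lam0 v t u0 :: real
    and FR fR :: "real \<Rightarrow> real"
  assumes lam0: "lam0 > 0" and v: "v > 0" and t: "t \<ge> 0" and u0: "u0 > 0"
    and fR_meas: "fR \<in> borel_measurable lborel"
    and fR_nonneg: "\<And>l. fR l \<ge> 0"
    and fR_neg: "\<And>l. l < 0 \<Longrightarrow> fR l = 0"
    and fR_int: "integrable lborel fR"
    and fR_one: "(\<integral>l. fR l \<partial>lborel) = 1"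
    and FR_def: "\<And>x. FR x = (\<integral>l\<in>{..x}. fR l \<partial>lborel)"
    and N0_ppp: "poisson_point_process P
       (density lborel (\<lambda>(x, (theta, l)).
          ennreal (lam0 * indicator {y. dist y o' > u0} x
                   * (indicator {0..<2*pi} theta / (2*pi)) * fR l)))
       N0"
  shows "poisson_point_process P
       (density lborel (\<lambda>y. ennreal (lambda_t lam0 FR fR v t (dist y o') u0)))
       (\<lambda>w. distr (N0 w) borel (rs_displace v t))"
proof -
  interpret flight_density fR FR
    using fR_meas fR_nonneg fR_neg fR_int fR_one FR_def by unfold_locales
  have "rs_displace v t \<in> borel_measurable (lborel :: ((real \<times> real) \<times> (real \<times> real)) measure)"
    unfolding rs_displace_def case_prod_beta
    by (simp, intro borel_measurable_continuous_onI continuous_intros)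
  from poisson_point_process_distr[OF N0_ppp, of "rs_displace v t" borel] this show ?thesis
    unfolding distr_marked_intensity[OF lam0 v t u0] measurable_density_eq1 by blast
qed

end
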